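(* Let $n\ge 1$ and let \[ f(x):=P(x)+iQ(x),\qquad P(x):=x^n+a_1x^{n-1}+a_2x^{n-2}+\cdots+a_n,\qquad Q(x):=b_1x^{n-1}+b_2x^{n-2}+\cdots+b_n, \] where all $a_i$ and $b_i$ are real. Suppose $f$ has (counting multiplicities) $n_+$ roots with positive imaginary part, $n_-$ roots with negative imaginary part and $n_0<n$ real roots, so $n_++n_-+n_0=n$. Let $d:=n-2\min\{n_+,n_-\}$. Then, counting multiplicities, there exist at least $d$ real roots $\mu_1,\mu_2,\ldots,\mu_d$ of $P$ and at least $d-1$ real roots $\nu_1,\nu_2,\ldots,\nu_{d-1}$ of $Q$ such that \[ \mu_1\le\nu_1\le\mu_2\le\nu_2\le\cdots\le\nu_{d-1}\le\mu_d . \] If $n_0=0$, then these inequalities may be taken to be strict.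
   Context: "Counting multiplicities" means that a root of multiplicity $m$ may appear up to $m$ times in the respective list. *)

theory Defs
  imports Complex_Main "HOL-Computational_Algebra.Polynomial"
begin

definition roots_in :: "complex poly \<Rightarrow> complex set \<Rightarrow> nat" where
  "roots_in f S = (\<Sum>z\<in>{z. poly f z = 0 \<and> z \<in> S}. order z f)"

end

theory Submission
  imports Defs "HOL-Analysis.Elementary_Metric_Spaces" "HOL-Real_Asymp.Real_Asymp"
    "HOL-Computational_Algebra.Fundamental_Theorem_Algebra"
begin

text \<open>On the real line write \<open>f(x) = \<rho>(x) cis \<theta>(x)\<close>, where \<open>\<theta>\<close> is the sum over the roots \<open>z\<close>
  of \<open>f\<close> of a continuous branch of \<open>arg (x - z)\<close>; then \<open>P = \<rho> cos \<theta>\<close> and \<open>Q = \<rho> sin \<theta>\<close>.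
  If \<open>f\<close> has no real roots, each root in the lower (upper) half plane makes its branch
  decrease from \<open>\<pi>\<close> (increase from \<open>-\<pi>\<close>) to \<open>0\<close>, so \<open>\<theta>\<close> runs from \<open>\<pi>(n\<^sub>- - n\<^sub>+)\<close> to \<open>0\<close>,
  an interval of length \<open>\<pi> d\<close>. By the intermediate value theorem \<open>\<theta>\<close> passes alternately through
  odd multiples of \<open>\<pi>/2\<close> (zeros of \<open>P\<close>) and multiples of \<open>\<pi>\<close> (zeros of \<open>Q\<close>), \<open>d\<close> and
  \<open>d - 1\<close> times, giving strictly interlacing roots.
  A real root \<open>r\<close> of \<open>f\<close> is a common root of \<open>P\<close> and \<open>Q\<close>; dividing it out lowers \<open>n\<^sub>0\<close> and \<open>d\<close>
  by one, and adding \<open>r\<close> to both root lists preserves weak interlacing.\<close>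

section \<open>Interlacing multisets\<close>

definition count_le :: "'a::linorder multiset \<Rightarrow> 'a \<Rightarrow> nat" where
  "count_le M t = size {#x \<in># M. x \<le> t#}"

text \<open>For sorted enumerations \<open>a\<^sub>1 \<le> a\<^sub>2 \<le> \<dots>\<close> of \<open>A\<close> and \<open>b\<^sub>1 \<le> b\<^sub>2 \<le> \<dots>\<close> of \<open>B\<close>
  this says \<open>a\<^sub>1 \<le> b\<^sub>1 \<le> a\<^sub>2 \<le> b\<^sub>2 \<le> \<dots>\<close>; unlike the index form, it is preserved
  by adding one element to both multisets.\<close>
definition interlacing :: "'a::linorder multiset \<Rightarrow> 'a multiset \<Rightarrow> bool" where
  "interlacing A B \<longleftrightarrow> (\<forall>t. count_le B t \<le> count_le A t \<and> count_le A t \<le> count_le B t + 1)"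

lemma count_le_mset: "count_le (mset xs) t = card {i. i < length xs \<and> xs ! i \<le> t}"
  unfolding count_le_def by (simp flip: mset_filter add: length_filter_conv_card)

lemma count_le_le_size: "count_le M t \<le> size M"
  unfolding count_le_def by (rule size_filter_mset_lesseq)

lemma sorted_nth_le_iff_less_count_le:
  assumes "sorted xs" "j < length xs"
  shows "xs ! j \<le> t \<longleftrightarrow> j < count_le (mset xs) t"
proof
  assume "xs ! j \<le> t"
  then have "{..j} \<subseteq> {i. i < length xs \<and> xs ! i \<le> t}"
    using assms by (auto intro: order_trans[OF sorted_nth_mono[OF assms(1)]])
  then have "card {..j} \<le> card {i. i < length xs \<and> xs ! i \<le> t}"
    by (intro card_mono) auto
  then show "j < count_le (mset xs) t" by (simp add: count_le_mset)
next
  assume less: "j < count_le (mset xs) t"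
  show "xs ! j \<le> t"
  proof (rule ccontr)
    assume "\<not> xs ! j \<le> t"
    then have "{i. i < length xs \<and> xs ! i \<le> t} \<subseteq> {..<j}"
      using sorted_nth_mono[OF assms(1)] by (auto simp: not_le) (meson le_less_trans not_le)
    then have "card {i. i < length xs \<and> xs ! i \<le> t} \<le> card {..<j}"
      by (intro card_mono) auto
    then show False using less by (simp add: count_le_mset)
  qed
qed

lemma interlacing_add_mset: "interlacing A B \<Longrightarrow> interlacing (add_mset r A) (add_mset r B)"
  by (simp add: interlacing_def count_le_def)

lemma interlacing_nth_le:
  assumes a: "sorted a" and b: "sorted b" and AB: "interlacing (mset a) (mset b)"
    and i: "i < length b" "Suc i < length a"
  shows "a ! i \<le> b ! i \<and> b ! i \<le> a ! Suc i"
proof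
  have "i < count_le (mset b) (b ! i)"
    using sorted_nth_le_iff_less_count_le[OF b i(1), of "b ! i"] by simp
  moreover have "count_le (mset b) (b ! i) \<le> count_le (mset a) (b ! i)"
    using AB by (simp add: interlacing_def)
  ultimately have "i < count_le (mset a) (b ! i)" by linarith
  then show "a ! i \<le> b ! i" using sorted_nth_le_iff_less_count_le[OF a] i by simp
  have "Suc i < count_le (mset a) (a ! Suc i)"
    using sorted_nth_le_iff_less_count_le[OF a i(2), of "a ! Suc i"] by simp
  moreover have "count_le (mset a) (a ! Suc i) \<le> count_le (mset b) (a ! Suc i) + 1"
    using AB by (simp add: interlacing_def)
  ultimately have "i < count_le (mset b) (a ! Suc i)" by linarith
  then show "b ! i \<le> a ! Suc i" using sorted_nth_le_iff_less_count_le[OF b i(1)] by simp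
qed

lemma interlacing_of_nth_le:
  assumes a: "sorted a" and b: "sorted b" and len: "length a = length b + 1"
    and chain: "\<And>i. i < length b \<Longrightarrow> a ! i \<le> b ! i \<and> b ! i \<le> a ! Suc i"
  shows "interlacing (mset a) (mset b)"
  unfolding interlacing_def
proof (intro allI conjI)
  fix t
  show "count_le (mset b) t \<le> count_le (mset a) t"
  proof (cases "count_le (mset b) t")
    case (Suc k)
    with count_le_le_size[of "mset b" t] have k: "k < length b" by simp
    with Suc have "b ! k \<le> t" using sorted_nth_le_iff_less_count_le[OF b k] by simp
    then have "a ! k \<le> t" using chain[OF k] by (blast intro: order_trans)
    then have "k < count_le (mset a) t" using sorted_nth_le_iff_less_count_le[OF a] k len by simp
    then show ?thesis using Suc by simp
  qed simp
  show "count_le (mset a) t \<le> count_le (mset b) t + 1"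
  proof (cases "count_le (mset a) t")
    case (Suc k)
    show ?thesis
    proof (cases k)
      case (Suc j)
      with \<open>count_le (mset a) t = Suc k\<close> count_le_le_size[of "mset a" t] len
      have j: "j < length b" "Suc j < length a" by simp_all
      with \<open>count_le (mset a) t = Suc k\<close> Suc have "a ! Suc j \<le> t"
        using sorted_nth_le_iff_less_count_le[OF a j(2)] by simp
      then have "b ! j \<le> t" using chain[OF j(1)] by (blast intro: order_trans)
      then have "j < count_le (mset b) t" using sorted_nth_le_iff_less_count_le[OF b j(1)] by simp
      then show ?thesis using \<open>count_le (mset a) t = Suc k\<close> Suc by simp
    qed (use \<open>count_le (mset a) t = Suc k\<close> in simp)
  qed simp
qed

lemma interlacing_of_chain:
  fixes \<mu> \<nu> :: "nat \<Rightarrow> 'a::linorder"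
  assumes chain: "\<forall>i < d - 1. \<mu> i \<le> \<nu> i \<and> \<nu> i \<le> \<mu> (Suc i)"
  shows "interlacing (mset (map \<mu> [0..<d])) (mset (map \<nu> [0..<d - 1]))"
proof (cases "d = 0")
  case True
  then show ?thesis by (simp add: interlacing_def count_le_def)
next
  case False
  have "\<mu> i \<le> \<mu> j" if "i \<le> j" "j < d" for i j
  proof (rule lift_Suc_mono_le_ivl[where N = "{..<d - 1}"])
    show "\<mu> k \<le> \<mu> (Suc k)" if "k \<in> {..<d - 1}" for k
      using chain that by (blast intro: order_trans)
  qed (use that in auto)
  then have "sorted (map \<mu> [0..<d])" by (auto simp: sorted_iff_nth_mono)
  moreover have "\<nu> i \<le> \<nu> j" if "i \<le> j" "j < d - 1" for i j
  proof (rule lift_Suc_mono_le_ivl[where N = "{..<d - 2}"])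
    show "\<nu> k \<le> \<nu> (Suc k)" if "k \<in> {..<d - 2}" for k
    proof -
      have "k < d - 1" "Suc k < d - 1" using that by auto
      then show ?thesis using chain by (blast intro: order_trans)
    qed
  qed (use that in auto)
  then have "sorted (map \<nu> [0..<d - 1])" by (auto simp: sorted_iff_nth_mono)
  ultimately show ?thesis
    using False chain by (intro interlacing_of_nth_le) auto
qed

lemma chain_of_interlacing:
  fixes A B :: "'a::linorder multiset"
  assumes AB: "interlacing A B" and size: "d \<le> size A" "d - 1 \<le> size B"
  obtains \<mu> \<nu> where "mset (map \<mu> [0..<d]) \<subseteq># A" "mset (map \<nu> [0..<d - 1]) \<subseteq># B"
    "\<forall>i < d - 1. \<mu> i \<le> \<nu> i \<and> \<nu> i \<le> \<mu> (Suc i)"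
proof
  define a b where "a = sorted_list_of_multiset A" and "b = sorted_list_of_multiset B"
  have ab: "mset a = A" "mset b = B" "sorted a" "sorted b" by (simp_all add: a_def b_def)
  show "mset (map ((!) a) [0..<d]) \<subseteq># A"
  proof -
    have "map ((!) a) [0..<d] = take d a" using size ab by (intro nth_equalityI) auto
    then show ?thesis using ab by (metis mset_subset_eq_add_left append_take_drop_id mset_append)
  qed
  show "mset (map ((!) b) [0..<d - 1]) \<subseteq># B"
  proof -
    have "map ((!) b) [0..<d - 1] = take (d - 1) b" using size ab by (intro nth_equalityI) auto
    then show ?thesis using ab by (metis mset_subset_eq_add_left append_take_drop_id mset_append)
  qed
  show "\<forall>i < d - 1. a ! i \<le> b ! i \<and> b ! i \<le> a ! Suc i"
  proof (intro allI impI)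
    fix i assume "i < d - 1"
    with size ab have "i < length b" "Suc i < length a" by auto
    with ab AB show "a ! i \<le> b ! i \<and> b ! i \<le> a ! Suc i" by (intro interlacing_nth_le) simp_all
  qed
qed

section \<open>Products of linear factors\<close>

lemma prod_linear_dvd_of_distinct_roots:
  fixes p :: "'a::idom poly" and k :: nat
  assumes "\<forall>i<k. poly p (y i) = 0" "inj_on y {..<k}"
  shows "(\<Prod>i<k. [:- y i, 1:]) dvd p"
  using assms
proof (induction k)
  case 0
  then show ?case by simp
next
  case (Suc k)
  then have "(\<Prod>i<k. [:- y i, 1:]) dvd p" by (simp add: inj_on_subset)
  then obtain r where r: "p = (\<Prod>i<k. [:- y i, 1:]) * r" by (elim dvdE)
  have "y k \<noteq> y i" if "i < k" for i
    using Suc.prems(2) that by (force simp: inj_on_def)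
  then have "poly (\<Prod>i<k. [:- y i, 1:]) (y k) \<noteq> 0" by (simp add: poly_prod)
  moreover have "poly p (y k) = 0" using Suc.prems(1) by simp
  ultimately have "[:- y k, 1:] dvd r" using r by (simp add: poly_eq_0_iff_dvd)
  then have "(\<Prod>i<k. [:- y i, 1:]) * [:- y k, 1:] dvd p"
    unfolding r by (rule mult_dvd_mono[OF dvd_refl])
  then show ?case by (simp only: prod.lessThan_Suc)
qed

lemma prod_mset_linear_map_upt:
  "(\<Prod>r\<in>#mset (map y [0..<k]). [:- r, 1:]) = (\<Prod>i<k. [:- y i, 1 :: 'a::comm_ring_1:])"
  by (simp add: prod_mset_prod_list prod.distinct_set_conv_list[symmetric] atLeast0LessThan
      o_def flip: mset_map)

lemma prod_mset_dvd_of_subseteq: "M \<subseteq># A \<Longrightarrow> (\<Prod>x\<in>#M. f x) dvd (\<Prod>x\<in>#A. f x)"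
  by (metis mset_subset_eq_exists_conv image_mset_union prod_mset.union dvd_triv_left)

lemma prod_linear_dvd_of_strict_chain:
  fixes \<mu> \<nu> :: "nat \<Rightarrow> 'a::linordered_idom"
  assumes roots: "\<forall>i<d. poly p (\<mu> i) = 0" "\<forall>i<d - 1. poly q (\<nu> i) = 0"
    and chain: "\<forall>i<d - 1. \<mu> i < \<nu> i \<and> \<nu> i < \<mu> (Suc i)"
  shows "(\<Prod>i<d. [:- \<mu> i, 1:]) dvd p" "(\<Prod>i<d - 1. [:- \<nu> i, 1:]) dvd q"
proof -
  have "strict_mono_on {..<d} \<mu>"
  proof (rule strict_mono_onI)
    show "\<mu> i < \<mu> j" if "i \<in> {..<d}" "j \<in> {..<d}" "i < j" for i j
    proof (rule lift_Suc_mono_less_ivl[where N = "{..<d - 1}"])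
      show "\<mu> k < \<mu> (Suc k)" if "k \<in> {..<d - 1}" for k
        using that chain by (blast intro: less_trans)
    qed (use that in auto)
  qed
  then show "(\<Prod>i<d. [:- \<mu> i, 1:]) dvd p"
    using roots(1) by (intro prod_linear_dvd_of_distinct_roots strict_mono_on_imp_inj_on)
  have "strict_mono_on {..<d - 1} \<nu>"
  proof (rule strict_mono_onI)
    show "\<nu> i < \<nu> j" if "i \<in> {..<d - 1}" "j \<in> {..<d - 1}" "i < j" for i j
    proof (rule lift_Suc_mono_less_ivl[where N = "{..<d - 2}"])
      show "\<nu> k < \<nu> (Suc k)" if "k \<in> {..<d - 2}" for k
      proof -
        have "k < d - 1" "Suc k < d - 1" using that by auto
        then show ?thesis using chain by (blast intro: less_trans)
      qed
    qed (use that in auto)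
  qed
  then show "(\<Prod>i<d - 1. [:- \<nu> i, 1:]) dvd q"
    using roots(2) by (intro prod_linear_dvd_of_distinct_roots strict_mono_on_imp_inj_on)
qed

section \<open>Level crossings of a continuous angle\<close>

lemma increasing_level_crossings:
  fixes th :: "real \<Rightarrow> real" and c :: "nat \<Rightarrow> real"
  assumes cont: "continuous_on UNIV th"
    and bot: "(th \<longlongrightarrow> L) at_bot" and top: "(th \<longlongrightarrow> R) at_top"
    and c: "strict_mono c" "L < c 0" "c (N - 1) < R"
  obtains x where "\<forall>j<N. th (x j) = c j" "\<forall>j. Suc j < N \<longrightarrow> x j < x (Suc j)"
proof -
  from order_tendstoD(2)[OF bot c(2)] obtain a where a: "\<And>y. y \<le> a \<Longrightarrow> th y < c 0"
    by (auto simp: eventually_at_bot_linorder)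
  from order_tendstoD(1)[OF top c(3)] obtain M where M: "\<And>y. y \<ge> M \<Longrightarrow> th y > c (N - 1)"
    by (auto simp: eventually_at_top_linorder)
  define b where "b = max a M"
  have "a \<le> b" "th b > c (N - 1)" using M by (simp_all add: b_def)
  txt \<open>The last crossing of level \<open>c j\<close> in \<open>[a, b]\<close>.\<close>
  define S where "S j = {a..b} \<inter> {y. th y \<le> c j}" for j
  define x where "x j = Sup (S j)" for j
  have bdd: "bdd_above (S j)" for j by (auto simp: S_def)
  have xS: "x j \<in> S j" for j
  proof -
    have "a \<in> S j"
      using a[of a] \<open>a \<le> b\<close> strict_mono_less_eq[OF c(1), of 0 j] by (auto simp: S_def)
    moreover have "closed (S j)" unfolding S_def
      by (intro closed_Int closed_atLeastAtMost closed_Collect_le cont continuous_on_const)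
    ultimately show ?thesis unfolding x_def using bdd by (intro closed_contains_Sup) auto
  qed
  have th_x: "th (x j) = c j" if "j < N" for j
  proof -
    have "c j \<le> c (N - 1)" using that strict_mono_less_eq[OF c(1)] by simp
    then have "th (x j) \<le> c j" "c j \<le> th b" "x j \<le> b"
      using xS[of j] \<open>th b > c (N - 1)\<close> by (auto simp: S_def)
    then obtain y where y: "x j \<le> y" "y \<le> b" "th y = c j"
      using IVT'[of th "x j" "c j" b] continuous_on_subset[OF cont] by auto
    then have "y \<in> S j" using xS[of j] by (auto simp: S_def)
    then have "y \<le> x j" unfolding x_def using bdd by (rule cSup_upper)
    then show ?thesis using y by simp
  qed
  have "x j < x (Suc j)" if "Suc j < N" for j
  proof -
    have "c j < c (Suc j)" using c(1) by (simp add: strict_mono_def)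
    then have "x j \<in> S (Suc j)" using xS[of j] by (auto simp: S_def)
    then have "x j \<le> x (Suc j)" unfolding x_def using bdd by (rule cSup_upper)
    moreover have "x j \<noteq> x (Suc j)"
      using th_x[of j] th_x[of "Suc j"] that \<open>c j < c (Suc j)\<close> by auto
    ultimately show ?thesis by simp
  qed
  with th_x that show ?thesis by blast
qed

lemma cos_sin_zeros_interlace_from_neg:
  fixes th :: "real \<Rightarrow> real" and d :: nat
  assumes cont: "continuous_on UNIV th"
    and bot: "(th \<longlongrightarrow> - pi * d) at_bot" and top: "(th \<longlongrightarrow> 0) at_top"
  obtains \<mu> \<nu> where "\<forall>i<d. cos (th (\<mu> i)) = 0" "\<forall>i<d - 1. sin (th (\<nu> i)) = 0"
    "\<forall>i<d - 1. \<mu> i < \<nu> i \<and> \<nu> i < \<mu> (Suc i)"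
proof (cases "d = 0")
  case True
  then show ?thesis using that by simp
next
  case False
  txt \<open>Levels \<open>c (2 i)\<close> are odd multiples of \<open>\<pi>/2\<close>, levels \<open>c (2 i + 1)\<close> multiples of \<open>\<pi>\<close>.\<close>
  define c where "c j = - pi * d + pi * (real j + 1) / 2" for j :: nat
  have "strict_mono c" by (rule strict_monoI) (simp add: c_def divide_strict_right_mono)
  moreover have "- pi * d < c 0" "c (2 * d - 1 - 1) < 0"
    using False by (simp_all add: c_def field_simps)
  ultimately obtain x where x: "\<forall>j < 2 * d - 1. th (x j) = c j"
    "\<forall>j. Suc j < 2 * d - 1 \<longrightarrow> x j < x (Suc j)"
    using increasing_level_crossings[OF cont bot top] by blast
  show ?thesis
  proof (rule that[of "\<lambda>i. x (2 * i)" "\<lambda>i. x (2 * i + 1)"])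
    have "cos (c (2 * i)) = 0" for i
    proof -
      have "c (2 * i) = of_int (2 * (int i - int d) + 1) * (pi / 2)"
        by (simp add: c_def field_simps)
      then show ?thesis
        by (subst cos_zero_iff_int) (auto intro!: exI[of _ "2 * (int i - int d) + 1"])
    qed
    then show "\<forall>i<d. cos (th (x (2 * i))) = 0" using x(1) by simp
    have "sin (c (2 * i + 1)) = 0" for i
    proof -
      have "c (2 * i + 1) = of_int (int i + 1 - int d) * pi" by (simp add: c_def field_simps)
      then show ?thesis by (subst sin_zero_iff_int2) blast
    qed
    then show "\<forall>i<d - 1. sin (th (x (2 * i + 1))) = 0" using x(1) by simp
    show "\<forall>i<d - 1. x (2 * i) < x (2 * i + 1) \<and> x (2 * i + 1) < x (2 * Suc i)"
      using x(2) by simp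
  qed
qed

lemma cos_sin_zeros_interlace:
  fixes th :: "real \<Rightarrow> real" and d :: nat
  assumes cont: "continuous_on UNIV th"
    and bot: "(th \<longlongrightarrow> L) at_bot" "\<bar>L\<bar> = pi * d" and top: "(th \<longlongrightarrow> 0) at_top"
  obtains \<mu> \<nu> where "\<forall>i<d. cos (th (\<mu> i)) = 0" "\<forall>i<d - 1. sin (th (\<nu> i)) = 0"
    "\<forall>i<d - 1. \<mu> i < \<nu> i \<and> \<nu> i < \<mu> (Suc i)"
proof (cases "L \<le> 0")
  case True
  with bot have "L = - pi * d" by simp
  with bot have "(th \<longlongrightarrow> - pi * d) at_bot" by simp
  from cos_sin_zeros_interlace_from_neg[OF cont this top] that show ?thesis by blast
next
  case False
  have "continuous_on UNIV (\<lambda>x. - th x)" using cont by (intro continuous_intros)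
  moreover from False bot have "((\<lambda>x. - th x) \<longlongrightarrow> - pi * d) at_bot"
    by (auto intro: tendsto_minus)
  moreover have "((\<lambda>x. - th x) \<longlongrightarrow> 0) at_top" using tendsto_minus[OF top] by simp
  ultimately obtain \<mu> \<nu> where "\<forall>i<d. cos (- th (\<mu> i)) = 0" "\<forall>i<d - 1. sin (- th (\<nu> i)) = 0"
    "\<forall>i<d - 1. \<mu> i < \<nu> i \<and> \<nu> i < \<mu> (Suc i)"
    by (rule cos_sin_zeros_interlace_from_neg)
  then show ?thesis using that by simp
qed

section \<open>The argument of a polynomial along the real line\<close>

text \<open>A continuous branch of \<open>arg (x - z)\<close> for real \<open>x\<close>, provided \<open>z\<close> is not real.\<close>
definition root_angle :: "complex \<Rightarrow> real \<Rightarrow> real" where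
  "root_angle z x = (if 0 < Im z then - pi / 2 else pi / 2) + arctan ((x - Re z) / Im z)"

lemma root_angle_limits:
  assumes "Im z \<noteq> 0"
  shows "(root_angle z \<longlongrightarrow> 0) at_top"
    and "(root_angle z \<longlongrightarrow> (if Im z < 0 then pi else - pi)) at_bot"
proof -
  consider "Im z > 0" | "Im z < 0" using assms by linarith
  then show "(root_angle z \<longlongrightarrow> 0) at_top"
    by cases (simp add: root_angle_def[abs_def], real_asymp)+
  from \<open>Im z \<noteq> 0\<close> consider "Im z > 0" | "Im z < 0" by linarith
  then show "(root_angle z \<longlongrightarrow> (if Im z < 0 then pi else - pi)) at_bot"
    by cases (simp add: root_angle_def[abs_def], real_asymp)+
qed

lemma continuous_on_root_angle: "Im z \<noteq> 0 \<Longrightarrow> continuous_on UNIV (root_angle z)"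
  unfolding root_angle_def[abs_def] by (intro continuous_intros) auto

lemma root_angle_polar:
  assumes "Im z \<noteq> 0"
  shows "of_real x - z = of_real (cmod (of_real x - z)) * cis (root_angle z x)"
proof -
  define u b where "u = x - Re z" and "b = Im z"
  define s where "s = sqrt (u\<^sup>2 + b\<^sup>2)"
  have b: "b \<noteq> 0" using assms by (simp add: b_def)
  then have s: "s > 0" by (simp add: s_def add_nonneg_pos)
  have "1 + (u / b)\<^sup>2 = (s / \<bar>b\<bar>)\<^sup>2" using b by (simp add: s_def field_simps)
  then have sqrt: "sqrt (1 + (u / b)\<^sup>2) = s / \<bar>b\<bar>" using s by simp
  have cos_arctan: "cos (arctan (u / b)) = \<bar>b\<bar> / s"
    and sin_arctan: "sin (arctan (u / b)) = u / b * (\<bar>b\<bar> / s)"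
    using s b by (simp_all add: cos_arctan sin_arctan sqrt)
  have "cos (root_angle z x) = u / s \<and> sin (root_angle z x) = - b / s"
  proof (cases "0 < b")
    case True
    then have "root_angle z x = arctan (u / b) - pi / 2" by (simp add: root_angle_def u_def b_def)
    then show ?thesis using True cos_arctan sin_arctan by (simp add: cos_diff sin_diff)
  next
    case False
    then have "root_angle z x = pi / 2 + arctan (u / b)" by (simp add: root_angle_def u_def b_def)
    then show ?thesis using False b cos_arctan sin_arctan by (simp add: cos_add sin_add)
  qed
  moreover have "cmod (of_real x - z) = s" by (simp add: cmod_def s_def u_def b_def)
  ultimately show ?thesis using s by (simp add: complex_eq_iff u_def b_def field_simps)
qed

lemma poly_prod_linear_polar:
  assumes "\<forall>z\<in>#M. Im z \<noteq> 0"
  shows "poly (\<Prod>z\<in>#M. [:- z, 1:]) (of_real x) =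
           of_real (\<Prod>z\<in>#M. cmod (of_real x - z)) * cis (\<Sum>z\<in>#M. root_angle z x)"
  using assms
proof (induction M)
  case empty
  then show ?case by simp
next
  case (add a M)
  then have "of_real x - a = of_real (cmod (of_real x - a)) * cis (root_angle a x)"
    by (intro root_angle_polar) simp
  moreover have "poly (\<Prod>z\<in>#add_mset a M. [:- z, 1:]) (of_real x) =
      (of_real x - a) * poly (\<Prod>z\<in>#M. [:- z, 1:]) (of_real x)"
    by (simp add: algebra_simps)
  ultimately show ?case using add by (simp add: cis_mult[symmetric] mult_ac)
qed

lemma sum_root_angle_limits:
  assumes "\<forall>z\<in>#M. Im z \<noteq> 0"
  shows "continuous_on UNIV (\<lambda>x. \<Sum>z\<in>#M. root_angle z x)"
    and "((\<lambda>x. \<Sum>z\<in>#M. root_angle z x) \<longlongrightarrow> 0) at_top"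
    and "((\<lambda>x. \<Sum>z\<in>#M. root_angle z x) \<longlongrightarrow>
           pi * (real (size {#z \<in># M. Im z < 0#}) - real (size {#z \<in># M. Im z > 0#}))) at_bot"
proof -
  show "continuous_on UNIV (\<lambda>x. \<Sum>z\<in>#M. root_angle z x)"
    using assms by (induction M) (auto intro!: continuous_on_add continuous_on_root_angle)
  show "((\<lambda>x. \<Sum>z\<in>#M. root_angle z x) \<longlongrightarrow> 0) at_top"
    using assms
  proof (induction M)
    case (add a M)
    then show ?case using tendsto_add[OF root_angle_limits(1)] by fastforce
  qed simp
  show "((\<lambda>x. \<Sum>z\<in>#M. root_angle z x) \<longlongrightarrow>
           pi * (real (size {#z \<in># M. Im z < 0#}) - real (size {#z \<in># M. Im z > 0#}))) at_bot"
    using assms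
  proof (induction M)
    case (add a M)
    then have "((\<lambda>x. root_angle a x + (\<Sum>z\<in>#M. root_angle z x)) \<longlongrightarrow>
        (if Im a < 0 then pi else - pi) +
        pi * (real (size {#z \<in># M. Im z < 0#}) - real (size {#z \<in># M. Im z > 0#}))) at_bot"
      by (intro tendsto_add root_angle_limits(2)) auto
    with add.prems show ?case by (auto simp: algebra_simps)
  qed simp
qed

section \<open>Roots of \<open>P + i Q\<close>\<close>

lemma roots_in_eq_size_filter:
  assumes "f \<noteq> 0"
  shows "roots_in f S = size {#z \<in># proots f. z \<in> S#}"
proof -
  let ?N = "{#z \<in># proots f. z \<in> S#}"
  have "size ?N = sum (count ?N) (set_mset ?N)" by (rule size_multiset_overloaded_eq)
  also have "set_mset ?N = {z. poly f z = 0 \<and> z \<in> S}" using assms by auto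
  also have "sum (count ?N) {z. poly f z = 0 \<and> z \<in> S} = roots_in f S"
    unfolding roots_in_def using assms by (intro sum.cong) auto
  finally show ?thesis ..
qed

lemma roots_in_half_planes_sum:
  fixes f :: "complex poly"
  assumes "f \<noteq> 0"
  shows "roots_in f {z. Im z > 0} + roots_in f {z. Im z < 0} + roots_in f {z. Im z = 0} = degree f"
proof -
  have "M = {#z \<in># M. Im z > 0#} + {#z \<in># M. Im z < 0#} + {#z \<in># M. Im z = 0#}"
    for M :: "complex multiset"
    by (induction M) auto
  from arg_cong[OF this[of "proots f"], of size] show ?thesis
    using assms by (simp add: roots_in_eq_size_filter size_proots_complex)
qed

definition cpoly :: "real poly \<Rightarrow> real poly \<Rightarrow> complex poly" where
  "cpoly P Q = map_poly complex_of_real P + smult \<i> (map_poly complex_of_real Q)"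

lemma poly_cpoly_of_real:
  "poly (cpoly P Q) (of_real x) = of_real (poly P x) + \<i> * of_real (poly Q x)"
proof -
  have "poly (map_poly of_real p) (of_real x) = (of_real (poly p x) :: complex)" for p
    by (induction p) (auto simp: map_poly_pCons)
  then show ?thesis by (simp add: cpoly_def)
qed

lemma cpoly_eq_0_of_real_iff:
  "poly (cpoly P Q) (of_real x) = 0 \<longleftrightarrow> poly P x = 0 \<and> poly Q x = 0"
  by (simp add: poly_cpoly_of_real complex_eq_iff)

lemma cpoly_mult:
  "cpoly (p * P) (p * Q) = map_poly complex_of_real p * cpoly P Q"
proof -
  have "map_poly complex_of_real (p * q) = map_poly complex_of_real p * map_poly complex_of_real q"
    for q
    by (rule poly_eqI) (simp add: coeff_map_poly coeff_mult)
  then show ?thesis by (simp add: cpoly_def algebra_simps)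
qed

lemma
  assumes "lead_coeff P = 1" "degree Q < degree P \<or> Q = 0"
  shows degree_cpoly: "degree (cpoly P Q) = degree P"
    and lead_coeff_cpoly: "lead_coeff (cpoly P Q) = 1"
proof -
  have coeff: "coeff (cpoly P Q) k = of_real (coeff P k) + \<i> * of_real (coeff Q k)" for k
    by (simp add: cpoly_def coeff_map_poly)
  have Q_high: "coeff Q k = 0" if "k \<ge> degree P" for k
    using assms(2) that by (auto intro: coeff_eq_0)
  with assms(1) coeff have top: "coeff (cpoly P Q) (degree P) = 1" by simp
  have "coeff (cpoly P Q) k = 0" if "k > degree P" for k
    using that Q_high by (simp add: coeff coeff_eq_0)
  then have "degree (cpoly P Q) = degree P"
    using top by (intro antisym degree_le le_degree) auto
  with top show "degree (cpoly P Q) = degree P" "lead_coeff (cpoly P Q) = 1" by simp_all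
qed

definition interlacing_number :: "real poly \<Rightarrow> real poly \<Rightarrow> nat" where
  "interlacing_number P Q = degree P - 2 * min (roots_in (cpoly P Q) {z. Im z > 0})
                                               (roots_in (cpoly P Q) {z. Im z < 0})"

lemma strict_interlacing_of_no_real_roots:
  fixes P Q :: "real poly"
  assumes monic: "lead_coeff P = 1" and deg: "degree Q < degree P \<or> Q = 0"
    and no_real: "roots_in (cpoly P Q) {z. Im z = 0} = 0"
  defines "d \<equiv> interlacing_number P Q"
  obtains \<mu> \<nu> where "\<forall>i<d. poly P (\<mu> i) = 0" "\<forall>i<d - 1. poly Q (\<nu> i) = 0"
    "\<forall>i<d - 1. \<mu> i < \<nu> i \<and> \<nu> i < \<mu> (Suc i)"
proof -
  define f M where "f = cpoly P Q" and "M = proots f"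
  have "lead_coeff f = 1" and "f \<noteq> 0"
    using lead_coeff_cpoly[OF monic deg] by (auto simp: f_def)
  then have f_eq: "f = (\<Prod>z\<in>#M. [:- z, 1:])"
    using complex_poly_decompose_multiset[of f] by (simp add: M_def)
  have nonreal: "\<forall>z\<in>#M. Im z \<noteq> 0"
    using no_real roots_in_eq_size_filter[OF \<open>f \<noteq> 0\<close>, of "{z. Im z = 0}"]
    by (auto simp: f_def M_def)
  define np nm where "np = size {#z \<in># M. Im z > 0#}" and "nm = size {#z \<in># M. Im z < 0#}"
  have "roots_in f {z. Im z > 0} = np" "roots_in f {z. Im z < 0} = nm"
    by (simp_all add: roots_in_eq_size_filter[OF \<open>f \<noteq> 0\<close>] np_def nm_def M_def)
  moreover have "roots_in f {z. Im z = 0} = 0" "degree f = degree P"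
    using no_real degree_cpoly[OF monic deg] by (simp_all add: f_def)
  ultimately have "np + nm = degree P" "d = max np nm - min np nm"
    using roots_in_half_planes_sum[OF \<open>f \<noteq> 0\<close>] by (simp_all add: d_def interlacing_number_def f_def)
  then have "\<bar>pi * (real nm - real np)\<bar> = pi * d" by (auto simp: abs_mult)
  define th where "th = (\<lambda>x. \<Sum>z\<in>#M. root_angle z x)"
  have th: "continuous_on UNIV th" "(th \<longlongrightarrow> pi * (real nm - real np)) at_bot" "(th \<longlongrightarrow> 0) at_top"
    using sum_root_angle_limits[OF nonreal] by (simp_all add: th_def np_def nm_def)
  have P_Q: "poly P x = \<rho> * cos (th x)" "poly Q x = \<rho> * sin (th x)"
    if "poly f (of_real x) = of_real \<rho> * cis (th x)" for x \<rho>
    using that unfolding f_def poly_cpoly_of_real by (simp_all add: complex_eq_iff)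
  have "poly f (of_real x) = of_real (\<Prod>z\<in>#M. cmod (of_real x - z)) * cis (th x)" for x
    unfolding th_def by (subst f_eq) (rule poly_prod_linear_polar[OF nonreal])
  with P_Q have "cos (th x) = 0 \<Longrightarrow> poly P x = 0" "sin (th x) = 0 \<Longrightarrow> poly Q x = 0" for x
    by simp_all
  with cos_sin_zeros_interlace[OF th(1,2) \<open>\<bar>_\<bar> = pi * d\<close> th(3)] that show ?thesis by metis
qed

lemma roots_in_cpoly_linear_mult:
  assumes "cpoly P Q \<noteq> 0"
  shows "roots_in (cpoly ([:- r, 1:] * P) ([:- r, 1:] * Q)) S =
           (if of_real r \<in> S then 1 else 0) + roots_in (cpoly P Q) S"
proof -
  have "cpoly ([:- r, 1:] * P) ([:- r, 1:] * Q) = [:- of_real r, 1:] * cpoly P Q"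
    unfolding cpoly_mult by (simp add: map_poly_pCons del: mult_pCons_left)
  moreover have "[:- of_real r, 1:] * cpoly P Q \<noteq> 0"
    using assms by (intro no_zero_divisors) simp_all
  moreover have
    "proots ([:- of_real r, 1:] * cpoly P Q) = add_mset (of_real r) (proots (cpoly P Q))"
    using assms by (subst proots_mult) simp_all
  ultimately show ?thesis
    using assms by (simp add: roots_in_eq_size_filter del: mult_pCons_left)
qed

lemma cpoly_split_real_root:
  assumes "lead_coeff P = 1" "degree Q < degree P \<or> Q = 0" "poly (cpoly P Q) (of_real r) = 0"
  obtains P1 Q1 where "P = [:- r, 1:] * P1" "Q = [:- r, 1:] * Q1"
    "lead_coeff P1 = 1" "degree Q1 < degree P1 \<or> Q1 = 0"
proof -
  from assms(3) have "poly P r = 0" "poly Q r = 0" by (simp_all add: cpoly_eq_0_of_real_iff)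
  then have "[:- r, 1:] dvd P" "[:- r, 1:] dvd Q" by (simp_all add: poly_eq_0_iff_dvd)
  then obtain P1 Q1 where P1: "P = [:- r, 1:] * P1" and Q1: "Q = [:- r, 1:] * Q1"
    by (elim dvdE)
  have "lead_coeff P1 = 1"
    using assms(1) by (simp add: P1 lead_coeff_mult del: mult_pCons_left)
  moreover have "degree Q1 < degree P1 \<or> Q1 = 0"
  proof (cases "Q1 = 0")
    case False
    moreover have "P1 \<noteq> 0" using \<open>lead_coeff P1 = 1\<close> by auto
    ultimately show ?thesis
      using assms(2) by (simp add: P1 Q1 degree_mult_eq del: mult_pCons_left)
  qed simp
  ultimately show ?thesis using P1 Q1 that by blast
qed

lemma interlacing_number_linear_mult:
  assumes "lead_coeff P = 1" "degree Q < degree P \<or> Q = 0"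
  shows "interlacing_number ([:- r, 1:] * P) ([:- r, 1:] * Q) = interlacing_number P Q + 1"
proof -
  have "cpoly P Q \<noteq> 0" using lead_coeff_cpoly[OF assms] by auto
  then have "roots_in (cpoly P Q) {z. Im z > 0} + roots_in (cpoly P Q) {z. Im z < 0} \<le> degree P"
    using roots_in_half_planes_sum degree_cpoly[OF assms] by (metis le_add1)
  moreover have "degree ([:- r, 1:] * P) = degree P + 1"
    using assms(1) by (subst degree_mult_eq) auto
  ultimately show ?thesis
    using roots_in_cpoly_linear_mult[OF \<open>cpoly P Q \<noteq> 0\<close>]
    by (simp add: interlacing_number_def del: mult_pCons_left)
qed

lemma exists_real_root_of_roots_in:
  assumes "roots_in f {z. Im z = 0} \<noteq> 0"
  obtains r where "poly f (of_real r) = 0"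
proof -
  have "{z. poly f z = 0 \<and> z \<in> {z. Im z = 0}} \<noteq> {}"
    using assms unfolding roots_in_def by (metis sum.empty)
  then obtain z where "poly f z = 0" "Im z = 0" by auto
  then have "poly f (of_real (Re z)) = 0" by (simp add: complex_is_Real_iff)
  with that show ?thesis .
qed

lemma interlacing_root_multisets:
  fixes P Q :: "real poly"
  assumes "lead_coeff P = 1" "degree Q < degree P \<or> Q = 0"
  shows "\<exists>A B. (\<Prod>r\<in>#A. [:- r, 1:]) dvd P \<and> (\<Prod>r\<in>#B. [:- r, 1:]) dvd Q \<and>
           interlacing_number P Q \<le> size A \<and> interlacing_number P Q - 1 \<le> size B \<and>
           interlacing A B"
  using assms
proof (induction "roots_in (cpoly P Q) {z. Im z = 0}" arbitrary: P Q)
  case 0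
  define d where "d = interlacing_number P Q"
  obtain \<mu> \<nu> where roots: "\<forall>i<d. poly P (\<mu> i) = 0" "\<forall>i<d - 1. poly Q (\<nu> i) = 0"
    and chain: "\<forall>i<d - 1. \<mu> i < \<nu> i \<and> \<nu> i < \<mu> (Suc i)"
    using strict_interlacing_of_no_real_roots[OF "0.prems" "0.hyps"[symmetric]]
    unfolding d_def by blast
  show ?case
  proof (intro exI conjI)
    show "(\<Prod>r\<in>#mset (map \<mu> [0..<d]). [:- r, 1:]) dvd P"
      "(\<Prod>r\<in>#mset (map \<nu> [0..<d - 1]). [:- r, 1:]) dvd Q"
      unfolding prod_mset_linear_map_upt by (rule prod_linear_dvd_of_strict_chain[OF roots chain])+
    show "interlacing (mset (map \<mu> [0..<d])) (mset (map \<nu> [0..<d - 1]))"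
      using chain by (intro interlacing_of_chain) (simp add: less_imp_le)
  qed (simp_all add: d_def)
next
  case (Suc k)
  from Suc.hyps(2) have "roots_in (cpoly P Q) {z. Im z = 0} \<noteq> 0" by simp
  then obtain r where "poly (cpoly P Q) (of_real r) = 0" by (rule exists_real_root_of_roots_in)
  with Suc.prems obtain P1 Q1 where P1: "P = [:- r, 1:] * P1" and Q1: "Q = [:- r, 1:] * Q1"
    and monic1: "lead_coeff P1 = 1" and deg1: "degree Q1 < degree P1 \<or> Q1 = 0"
    by (rule cpoly_split_real_root)
  have "cpoly P1 Q1 \<noteq> 0" using lead_coeff_cpoly[OF monic1 deg1] by auto
  then have "k = roots_in (cpoly P1 Q1) {z. Im z = 0}"
    using Suc.hyps(2) roots_in_cpoly_linear_mult unfolding P1 Q1 by simp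
  from Suc.hyps(1)[OF this monic1 deg1] obtain A B
    where AB: "(\<Prod>r\<in>#A. [:- r, 1:]) dvd P1" "(\<Prod>r\<in>#B. [:- r, 1:]) dvd Q1"
      "interlacing_number P1 Q1 \<le> size A" "interlacing_number P1 Q1 - 1 \<le> size B"
      "interlacing A B"
    by blast
  have "interlacing_number P Q = interlacing_number P1 Q1 + 1"
    unfolding P1 Q1 using monic1 deg1 by (rule interlacing_number_linear_mult)
  show ?case
  proof (intro exI conjI)
    show "(\<Prod>r\<in>#add_mset r A. [:- r, 1:]) dvd P" "(\<Prod>r\<in>#add_mset r B. [:- r, 1:]) dvd Q"
      using AB(1,2) unfolding P1 Q1 by (simp_all add: mult_dvd_mono del: mult_pCons_left)
    show "interlacing_number P Q \<le> size (add_mset r A)"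
      "interlacing_number P Q - 1 \<le> size (add_mset r B)"
      using AB(3,4) \<open>interlacing_number P Q = _\<close> by simp_all
    show "interlacing (add_mset r A) (add_mset r B)" using AB(5) by (rule interlacing_add_mset)
  qed
qed

theorem theorem3p2:
  fixes P Q :: "real poly" and n :: nat
  assumes n: "n \<ge> 1"
    and P: "degree P = n" "lead_coeff P = 1"
    and Q: "degree Q < n"
  defines "f \<equiv> map_poly complex_of_real P + smult \<i> (map_poly complex_of_real Q)"
  defines "np \<equiv> roots_in f {z. Im z > 0}"
    and "nm \<equiv> roots_in f {z. Im z < 0}"
    and "n0 \<equiv> roots_in f {z. Im z = 0}"
  defines "d \<equiv> n - 2 * min np nm"
  assumes "n0 < n"
  shows "(\<exists>\<mu> \<nu> :: nat \<Rightarrow> real.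
            (\<Prod>i<d. [:- \<mu> i, 1:]) dvd P \<and> (\<Prod>i<d - 1. [:- \<nu> i, 1:]) dvd Q \<and>
            (\<forall>i < d - 1. \<mu> i \<le> \<nu> i \<and> \<nu> i \<le> \<mu> (Suc i)))
       \<and> (n0 = 0 \<longrightarrow>
          (\<exists>\<mu> \<nu> :: nat \<Rightarrow> real.
            (\<Prod>i<d. [:- \<mu> i, 1:]) dvd P \<and> (\<Prod>i<d - 1. [:- \<nu> i, 1:]) dvd Q \<and>
            (\<forall>i < d - 1. \<mu> i < \<nu> i \<and> \<nu> i < \<mu> (Suc i))))"
proof (intro conjI impI)
  have f: "f = cpoly P Q" by (simp add: f_def cpoly_def)
  have deg: "degree Q < degree P \<or> Q = 0" using P Q by simp
  have d: "d = interlacing_number P Q"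
    by (simp add: d_def np_def nm_def f interlacing_number_def P(1))
  obtain A B where AB: "(\<Prod>r\<in>#A. [:- r, 1:]) dvd P" "(\<Prod>r\<in>#B. [:- r, 1:]) dvd Q"
    "d \<le> size A" "d - 1 \<le> size B" "interlacing A B"
    using interlacing_root_multisets[OF P(2) deg] unfolding d by blast
  then obtain \<mu> \<nu> where sub: "mset (map \<mu> [0..<d]) \<subseteq># A" "mset (map \<nu> [0..<d - 1]) \<subseteq># B"
    and chain: "\<forall>i < d - 1. \<mu> i \<le> \<nu> i \<and> \<nu> i \<le> \<mu> (Suc i)"
    by (elim chain_of_interlacing)
  have "(\<Prod>i<d. [:- \<mu> i, 1:]) dvd P" "(\<Prod>i<d - 1. [:- \<nu> i, 1:]) dvd Q"
    using dvd_trans[OF prod_mset_dvd_of_subseteq[OF sub(1)] AB(1)]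
      dvd_trans[OF prod_mset_dvd_of_subseteq[OF sub(2)] AB(2)]
    by (simp_all only: prod_mset_linear_map_upt)
  with chain show "\<exists>\<mu> \<nu> :: nat \<Rightarrow> real.
      (\<Prod>i<d. [:- \<mu> i, 1:]) dvd P \<and> (\<Prod>i<d - 1. [:- \<nu> i, 1:]) dvd Q \<and>
      (\<forall>i < d - 1. \<mu> i \<le> \<nu> i \<and> \<nu> i \<le> \<mu> (Suc i))" by blast
  assume "n0 = 0"
  then obtain \<mu> \<nu> where roots: "\<forall>i<d. poly P (\<mu> i) = 0" "\<forall>i<d - 1. poly Q (\<nu> i) = 0"
    and chain: "\<forall>i<d - 1. \<mu> i < \<nu> i \<and> \<nu> i < \<mu> (Suc i)"
    using strict_interlacing_of_no_real_roots[OF P(2) deg] by (auto simp: n0_def f d)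
  with prod_linear_dvd_of_strict_chain[OF roots chain]
  show "\<exists>\<mu> \<nu> :: nat \<Rightarrow> real.
      (\<Prod>i<d. [:- \<mu> i, 1:]) dvd P \<and> (\<Prod>i<d - 1. [:- \<nu> i, 1:]) dvd Q \<and>
      (\<forall>i < d - 1. \<mu> i < \<nu> i \<and> \<nu> i < \<mu> (Suc i))" by blast
qed

end
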